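(* Let $F$ be a euclidean field, $B=F[\![X]\!]$, and $f\in B\setminus\{0\}$. Then $$\operatorname{PO}(f)=\begin{cases}\Phi(F^2,0)\cup\Phi(\epsilon(f)F^2,\mathrm{val}(f)) & \text{if } \mathrm{val}(f)\text{ is odd},\\ \Phi(F^2,0) & \text{if } \mathrm{val}(f)\text{ is even and }\epsilon(f)=1,\\ \Phi(F^2,0)\cup\Phi(F,\mathrm{val}(f))\cup\Phi(F,\mathrm{val}(f)+1) & \text{otherwise.}\end{cases}$$ In particular, $\operatorname{PO}(f)=\operatorname{PO}(1)$ if $\mathrm{val}(f)$ is even and $\epsilon(f)=1$, and $\operatorname{PO}(f)=\operatorname{PO}(\epsilon(f)X^{\mathrm{val}(f)})$ otherwise.
   Context: A euclidean field is a formally real field $F$ with $F=F^2\cup(-F^2)$, where $F^2=\{c^2:c\in F\}$; for $c\in F\setminus\{0\}$ its sign is $1$ if $c\in F^2$ and $-1$ if $-c\in F^2$; for $\epsilon\in\{\pm1\}$, $\epsilon F^2=\{\epsilon c^2: c\in F\}$. Let $B=F[\![X]\!]$, and for nonzero $f=\sum_{i\ge n}a_iX^i\in B$ with $a_n\ne0$ let $\mathrm{val}(f)=n$ (the order of $f$) and $\mathrm{an}(f)=a_n$ (its leading coefficient); $\epsilon(f)$ is the sign of $\mathrm{an}(f)$. For a subset $M\subseteq F$ (a quasi-quadratic module of $F$) and an integer $n\ge0$, $$\Phi(M,n)=\{x\in B\setminus\{0\}:\ \mathrm{val}(x)\equiv n \pmod 2,\ \mathrm{val}(x)\ge n,\ \mathrm{an}(x)\in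 M\}\cup\{0\}.$$ For $g\in B$, $\operatorname{PO}(g)=\{\sigma_0+\sigma_1g:\ \sigma_0,\sigma_1\in\sum B^2\}$ is the monogenic quadratic module (preordering) generated by $g$, where $\sum B^2$ is the set of finite sums of squares in $B$. *)

theory Defs
  imports "HOL-Computational_Algebra.Formal_Power_Series"
begin

definition squares :: "'a::comm_ring_1 set" where
  "squares = {c ^ 2 | c. True}"

definition sum_squares :: "'a::comm_ring_1 set" where
  "sum_squares = {sum_list (map (\<lambda>x. x ^ 2) xs) | xs. True}"

definition formally_real :: "'a::field itself \<Rightarrow> bool" where
  "formally_real _ \<longleftrightarrow> (- 1 :: 'a) \<notin> sum_squares"

definition euclidean_field :: "'a::field itself \<Rightarrow> bool" where
  "euclidean_field T \<longleftrightarrow> formally_real T \<and>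
     (UNIV :: 'a set) = squares \<union> uminus ` squares"

definition fsign :: "'a::field \<Rightarrow> 'a" where
  "fsign c = (if c \<in> squares then 1 else - 1)"

text \<open>val(f) = subdegree f, an(f) = fps_nth f (subdegree f).\<close>
definition fan :: "'a::field fps \<Rightarrow> 'a" where
  "fan f = fps_nth f (subdegree f)"

definition feps :: "'a::field fps \<Rightarrow> 'a" where
  "feps f = fsign (fan f)"

definition scaled_squares :: "'a::field \<Rightarrow> 'a set" where
  "scaled_squares e = {e * c ^ 2 | c. True}"

definition Phi :: "'a::field set \<Rightarrow> nat \<Rightarrow> 'a fps set" where
  "Phi M n = {x. x \<noteq> 0 \<and> subdegree x mod 2 = n mod 2 \<and> subdegree x \<ge> n \<and> fan x \<in> M} \<union> {0}"

definition PO :: "'a::field fps \<Rightarrow> 'a fps set" where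
  "PO g = {s0 + s1 * g | s0 s1. s0 \<in> sum_squares \<and> s1 \<in> sum_squares}"

end

theory Submission
  imports Defs
begin

text \<open>
  Let Sq = Phi(F^2, 0), the series of even order with square leading coefficient. As 2 is
  invertible, a series with constant term 1 is a square, so Sq is the set of squares of B;
  being closed under addition when F is euclidean, it is also the set of sums of squares,
  whence PO(f) = Sq + Sq f, and Sq f is exactly Phi(\<epsilon>(f) F^2, val f). If val f is odd,
  the two summands have orders of different parity, so the one of lower order determines the
  sum. If val f is even and \<epsilon>(f) = 1, then Sq f \<subseteq> Sq. If val f is even and
  \<epsilon>(f) = -1, then -f = h^2, and every multiple y h^2 of f equals
  ((y+1) h/2)^2 + ((y-1)/2)^2 f, so PO(f) = Sq \<union> X^(val f) B.
\<close>

unbundle fps_syntax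

section \<open>Euclidean fields\<close>

lemma power2_in_sum_squares: "(x::'a::comm_ring_1)\<^sup>2 \<in> sum_squares"
  unfolding sum_squares_def by (rule CollectI, rule exI[of _ "[x]"]) simp

lemma add_power2_in_sum_squares: "(x::'a::comm_ring_1)\<^sup>2 + y\<^sup>2 \<in> sum_squares"
  unfolding sum_squares_def by (rule CollectI, rule exI[of _ "[x, y]"]) simp

lemma mem_squares_iff: "c \<in> squares \<longleftrightarrow> (\<exists>d. c = d\<^sup>2)"
  unfolding squares_def by simp

lemma one_in_squares: "(1::'a::comm_ring_1) \<in> squares"
  unfolding squares_def by (rule CollectI, rule exI[of _ 1]) simp

lemma euclidean_minus_one_not_sum_squares:
  assumes "euclidean_field TYPE('a::field)"
  shows "(-1::'a) \<notin> sum_squares"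
  using assms unfolding euclidean_field_def formally_real_def by blast

lemma euclidean_two_neq_zero:
  assumes "euclidean_field TYPE('a::field)"
  shows "(2::'a) \<noteq> 0"
proof
  assume "(2::'a) = 0"
  then have "(-1::'a) = 1\<^sup>2"
    by (simp add: eq_neg_iff_add_eq_0)
  then show False
    using euclidean_minus_one_not_sum_squares[OF assms] power2_in_sum_squares by metis
qed

lemma euclidean_minus_one_not_square:
  assumes "euclidean_field TYPE('a::field)"
  shows "(-1::'a) \<notin> squares"
  using euclidean_minus_one_not_sum_squares[OF assms] power2_in_sum_squares
  unfolding squares_def by fastforce

lemma euclidean_square_or_neg_square:
  fixes c :: "'a::field"
  assumes "euclidean_field TYPE('a)"
  obtains d :: 'a where "c = d\<^sup>2" | d where "c = - d\<^sup>2"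
  using assms unfolding euclidean_field_def squares_def by blast

lemma euclidean_add_squares:
  assumes E: "euclidean_field TYPE('a::field)" and c: "(c::'a) \<noteq> 0"
  shows "c\<^sup>2 + d\<^sup>2 \<noteq> 0" and "c\<^sup>2 + d\<^sup>2 \<in> squares"
proof -
  note not_sos = euclidean_minus_one_not_sum_squares[OF E]
  show nz: "c\<^sup>2 + d\<^sup>2 \<noteq> 0"
  proof
    assume "c\<^sup>2 + d\<^sup>2 = 0"
    then have "(d / c)\<^sup>2 = -1"
      using c by (simp add: field_simps power2_eq_square eq_neg_iff_add_eq_0 add.commute)
    then show False
      using not_sos power2_in_sum_squares by metis
  qed
  show "c\<^sup>2 + d\<^sup>2 \<in> squares"
  proof (cases rule: euclidean_square_or_neg_square[OF E, of "c\<^sup>2 + d\<^sup>2"])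
    case (1 e)
    then show ?thesis unfolding squares_def by blast
  next
    case (2 e)
    with nz have "e \<noteq> 0" by auto
    with 2 have "(c / e)\<^sup>2 + (d / e)\<^sup>2 = -1"
      by (simp add: field_simps power2_eq_square)
    then show ?thesis
      using not_sos add_power2_in_sum_squares by metis
  qed
qed

lemma euclidean_fsign_times_square:
  assumes "euclidean_field TYPE('a::field)" and "(c::'a) \<noteq> 0"
  obtains d where "d \<noteq> 0" and "c = fsign c * d\<^sup>2"
proof (cases rule: euclidean_square_or_neg_square[OF assms(1), of c])
  case (1 d)
  then have "fsign c = 1"
    unfolding fsign_def squares_def by auto
  then show ?thesis
    using that 1 assms(2) by auto
next
  case (2 d)
  with assms(2) have d: "d \<noteq> 0" by auto
  have "c \<notin> squares"
  proof
    assume "c \<in> squares"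
    then obtain e where "c = e\<^sup>2" unfolding squares_def by auto
    with 2 d have "(-1::'a) = (e / d)\<^sup>2"
      by (simp add: field_simps power2_eq_square)
    then show False
      using euclidean_minus_one_not_square[OF assms(1)] unfolding squares_def by blast
  qed
  then show ?thesis
    using that 2 d unfolding fsign_def by auto
qed

lemma fsign_cases: "fsign c = 1 \<or> fsign c = -1"
  unfolding fsign_def by simp

lemma euclidean_fsign_sign:
  assumes "euclidean_field TYPE('a::field)" and "e = 1 \<or> e = (-1::'a)"
  shows "fsign e = e"
  using assms one_in_squares euclidean_minus_one_not_square[OF assms(1)]
  unfolding fsign_def by auto

section \<open>Order and leading coefficient of power series\<close>

lemma fan_mult:
  fixes f g :: "'a::field fps"
  assumes "f \<noteq> 0" and "g \<noteq> 0"
  shows "fan (f * g) = fan f * fan g"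
  using assms by (simp add: fan_def)

lemma fan_power2:
  fixes f :: "'a::field fps"
  shows "fan (f\<^sup>2) = (fan f)\<^sup>2"
  by (cases "f = 0") (simp_all add: fan_def power2_eq_square)

lemma add_lower_subdegree:
  fixes f g :: "'a::field fps"
  assumes "f \<noteq> 0" and "g = 0 \<or> subdegree f < subdegree g"
  shows "f + g \<noteq> 0" and "subdegree (f + g) = subdegree f" and "fan (f + g) = fan f"
proof -
  have nth: "(f + g) $ subdegree f = f $ subdegree f"
    using assms by auto
  then show "f + g \<noteq> 0"
    using assms(1) by (metis fps_zero_nth nth_subdegree_zero_iff)
  show sub: "subdegree (f + g) = subdegree f"
    using assms by (auto intro: subdegree_add_eq1)
  show "fan (f + g) = fan f"
    unfolding fan_def sub nth ..
qed

lemma mem_Phi_iff: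
  "x \<in> Phi M n \<longleftrightarrow> x = 0 \<or> (subdegree x mod 2 = n mod 2 \<and> n \<le> subdegree x \<and> fan x \<in> M)"
  unfolding Phi_def by auto

lemma Phi_UNIV_Un_Phi_UNIV_Suc:
  "Phi UNIV n \<union> Phi UNIV (n + 1) = {x. x = 0 \<or> n \<le> subdegree x}"
  unfolding Phi_def by auto presburger+

lemma monomial_subdegree_fan:
  fixes e :: "'a::field"
  assumes "e \<noteq> 0"
  shows "fps_const e * fps_X ^ n \<noteq> 0" and "subdegree (fps_const e * fps_X ^ n) = n"
    and "fan (fps_const e * fps_X ^ n) = e"
proof -
  have nth: "(fps_const e * fps_X ^ n) $ k = (if k = n then e else 0)" for k
    by (simp add: fps_X_power_mult_right_nth[of "fps_const e", simplified mult.commute])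
  show sub: "subdegree (fps_const e * fps_X ^ n) = n"
    by (rule subdegreeI) (auto simp: nth assms)
  show "fps_const e * fps_X ^ n \<noteq> 0"
    by (metis nth assms fps_zero_nth)
  show "fan (fps_const e * fps_X ^ n) = e"
    unfolding fan_def sub by (simp add: nth)
qed

lemma euclidean_feps_cases:
  fixes f :: "'a::field fps"
  assumes "euclidean_field TYPE('a)" and "f \<noteq> 0"
  obtains d where "d \<noteq> 0" and "fan f = feps f * d\<^sup>2"
  using euclidean_fsign_times_square[OF assms(1), of "fan f"] assms(2)
  unfolding feps_def fan_def by auto

section \<open>Square roots of power series\<close>

text \<open>Comparing the coefficients of X^n in s^2 = u gives 2 s_n = u_n - (\<Sum>0<i<n. s_i s_(n-i)) once s_0 = 1.\<close>

fun fps_sqrt_coeff :: "'a::field fps \<Rightarrow> nat \<Rightarrow> 'a" where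
  "fps_sqrt_coeff u 0 = 1"
| "fps_sqrt_coeff u (Suc n) =
     (u $ Suc n - (\<Sum>i\<in>{1..n}. fps_sqrt_coeff u i * fps_sqrt_coeff u (Suc n - i))) / 2"

lemma fps_sqrt_coeff_square:
  fixes u :: "'a::field fps"
  assumes "(2::'a) \<noteq> 0" and "u $ 0 = 1"
  shows "(Abs_fps (fps_sqrt_coeff u))\<^sup>2 = u"
proof (rule fps_ext)
  fix m
  let ?c = "fps_sqrt_coeff u"
  show "(Abs_fps ?c)\<^sup>2 $ m = u $ m"
  proof (cases m)
    case 0
    then show ?thesis using assms(2) by (simp add: power2_eq_square)
  next
    case (Suc n)
    have "(Abs_fps ?c)\<^sup>2 $ m = (\<Sum>i=0..Suc n. ?c i * ?c (Suc n - i))"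
      by (simp add: power2_eq_square fps_mult_nth Suc)
    also have "\<dots> = ?c 0 * ?c (Suc n) + (\<Sum>i=1..n. ?c i * ?c (Suc n - i)) + ?c (Suc n)"
      by (simp add: sum.atLeast_Suc_atMost sum.cl_ivl_Suc)
    also have "\<dots> = u $ m"
      using assms(1) Suc by (simp only: fps_sqrt_coeff.simps) (simp add: field_simps)
    finally show ?thesis .
  qed
qed

section \<open>Sums of squares of power series\<close>

abbreviation Sq :: "'a::field fps set" where
  "Sq \<equiv> Phi squares 0"

lemma mem_Sq_iff: "x \<in> Sq \<longleftrightarrow> x = 0 \<or> (even (subdegree x) \<and> fan x \<in> squares)"
  unfolding Phi_def by auto

lemma zero_in_Sq: "0 \<in> Sq"
  by (simp add: mem_Sq_iff)

lemma power2_in_Sq: "(y::'a::field fps)\<^sup>2 \<in> Sq"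
  unfolding mem_Sq_iff mem_squares_iff by (auto simp: fan_power2)

lemma add_in_Sq_same_subdegree:
  fixes x y :: "'a::field fps"
  assumes E: "euclidean_field TYPE('a)"
    and x: "x \<in> Sq" "x \<noteq> 0" and y: "y \<in> Sq" "y \<noteq> 0"
    and same: "subdegree x = subdegree y"
  shows "x + y \<in> Sq"
proof -
  obtain c d where c: "fan x = c\<^sup>2" and d: "fan y = d\<^sup>2"
    using x y unfolding mem_Sq_iff mem_squares_iff by auto
  have "c \<noteq> 0"
    using c x(2) unfolding fan_def by auto
  note cd = euclidean_add_squares[OF E this, of d]
  have nth: "(x + y) $ subdegree x = c\<^sup>2 + d\<^sup>2"
    using c d same unfolding fan_def by (metis fps_add_nth)
  have sub: "subdegree (x + y) = subdegree x"
  proof (rule subdegreeI)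
    show "(x + y) $ subdegree x \<noteq> 0"
      unfolding nth by (rule cd(1))
  next
    fix i
    assume i: "i < subdegree x"
    then have "x $ i = 0"
      by (rule nth_less_subdegree_zero)
    moreover from i have "y $ i = 0"
      unfolding same by (rule nth_less_subdegree_zero)
    ultimately show "(x + y) $ i = 0" by simp
  qed
  show ?thesis
    using sub nth cd x unfolding mem_Sq_iff fan_def by auto
qed

lemma add_in_Sq:
  fixes x y :: "'a::field fps"
  assumes E: "euclidean_field TYPE('a)" and x: "x \<in> Sq" and y: "y \<in> Sq"
  shows "x + y \<in> Sq"
proof (cases "x = 0 \<or> y = 0")
  case True
  then show ?thesis using x y by auto
next
  case False
  consider "subdegree x < subdegree y" | "subdegree y < subdegree x"
    | "subdegree x = subdegree y" by linarith
  then show ?thesis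
  proof cases
    case 1
    then show ?thesis
      using add_lower_subdegree[of x y] False x unfolding mem_Sq_iff by auto
  next
    case 2
    then show ?thesis
      using add_lower_subdegree[of y x] False y unfolding mem_Sq_iff by (auto simp: add.commute)
  next
    case 3
    then show ?thesis
      using add_in_Sq_same_subdegree[OF E x _ y] False by blast
  qed
qed

lemma Sq_imp_power2:
  fixes x :: "'a::field fps"
  assumes two: "(2::'a) \<noteq> 0" and x: "x \<in> Sq"
  obtains y where "x = y\<^sup>2"
proof (cases "x = 0")
  case True
  then show ?thesis using that[of 0] by simp
next
  case False
  obtain m where m: "subdegree x = 2 * m"
    using x False unfolding mem_Sq_iff by auto
  obtain c where c: "fan x = c\<^sup>2"
    using x False unfolding mem_Sq_iff mem_squares_iff by auto
  have c0: "c \<noteq> 0"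
    using c False unfolding fan_def by auto
  define u where "u = fps_const (inverse (c\<^sup>2)) * fps_shift (2 * m) x"
  have "u $ 0 = 1"
    using c c0 m unfolding u_def fan_def by simp
  with two obtain s where s: "s\<^sup>2 = u"
    using fps_sqrt_coeff_square by blast
  have "x = fps_shift (2 * m) x * fps_X ^ (2 * m)"
    using subdegree_decompose[of x] m by simp
  also have "fps_shift (2 * m) x = fps_const (c\<^sup>2) * s\<^sup>2"
    using c0 s by (simp add: u_def mult.assoc[symmetric] fps_const_mult)
  also have "(fps_X::'a fps) ^ (2 * m) = (fps_X ^ m)\<^sup>2"
    by (metis power_mult mult.commute)
  finally have "x = (fps_const c * s * fps_X ^ m)\<^sup>2"
    by (simp add: power_mult_distrib fps_const_power)
  then show ?thesis by (rule that)
qed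

lemma euclidean_sum_squares_fps:
  assumes E: "euclidean_field TYPE('a::field)"
  shows "(sum_squares :: 'a fps set) = Sq"
proof
  show "sum_squares \<subseteq> (Sq :: 'a fps set)"
  proof
    fix z :: "'a fps"
    assume "z \<in> sum_squares"
    then obtain xs where z: "z = sum_list (map (\<lambda>x. x\<^sup>2) xs)"
      unfolding sum_squares_def by auto
    have "sum_list (map (\<lambda>x. x\<^sup>2) xs) \<in> (Sq :: 'a fps set)"
      by (induction xs) (auto intro: zero_in_Sq add_in_Sq[OF E] power2_in_Sq)
    then show "z \<in> Sq" using z by simp
  qed
  show "Sq \<subseteq> (sum_squares :: 'a fps set)"
  proof
    fix z :: "'a fps"
    assume "z \<in> Sq"
    then obtain y where "z = y\<^sup>2"
      using Sq_imp_power2[OF euclidean_two_neq_zero[OF E]] by blast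
    then show "z \<in> sum_squares"
      by (simp add: power2_in_sum_squares)
  qed
qed

section \<open>The preordering generated by a power series\<close>

lemma PO_eq_Sq_plus_Sq_times:
  fixes f :: "'a::field fps"
  assumes "euclidean_field TYPE('a)"
  shows "PO f = {p + q * f | p q. p \<in> Sq \<and> q \<in> Sq}"
  unfolding PO_def euclidean_sum_squares_fps[OF assms] ..

lemma Sq_times_subset_Phi:
  fixes f :: "'a::field fps"
  assumes E: "euclidean_field TYPE('a)" and f: "f \<noteq> 0"
  shows "(\<lambda>q. q * f) ` Sq \<subseteq> Phi (scaled_squares (feps f)) (subdegree f)"
proof
  fix z
  assume "z \<in> (\<lambda>q. q * f) ` Sq"
  then obtain q where q: "q \<in> Sq" and z: "z = q * f"
    by blast
  obtain d where d: "fan f = feps f * d\<^sup>2"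
    using euclidean_feps_cases[OF E f] by blast
  show "z \<in> Phi (scaled_squares (feps f)) (subdegree f)"
  proof (cases "q = 0")
    case False
    then obtain a where "even (subdegree q)" and "fan q = a\<^sup>2"
      using q unfolding mem_Sq_iff mem_squares_iff by auto
    moreover have "subdegree z = subdegree q + subdegree f" and "fan z = fan q * fan f"
      using False f z by (simp_all add: fan_mult)
    ultimately have "subdegree z mod 2 = subdegree f mod 2" and "subdegree f \<le> subdegree z"
      and "fan z = feps f * (a * d)\<^sup>2"
      using d by (auto simp: power_mult_distrib)
    then show ?thesis
      unfolding mem_Phi_iff scaled_squares_def by blast
  qed (simp add: z mem_Phi_iff)
qed

lemma Phi_subset_Sq_times:
  fixes f :: "'a::field fps"
  assumes E: "euclidean_field TYPE('a)" and f: "f \<noteq> 0"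
  shows "Phi (scaled_squares (feps f)) (subdegree f) \<subseteq> (\<lambda>q. q * f) ` Sq"
proof
  fix z
  assume z: "z \<in> Phi (scaled_squares (feps f)) (subdegree f)"
  show "z \<in> (\<lambda>q. q * f) ` Sq"
  proof (cases "z = 0")
    case True
    then show ?thesis
      using zero_in_Sq by force
  next
    case False
    with z obtain c where par: "subdegree z mod 2 = subdegree f mod 2"
      and le: "subdegree f \<le> subdegree z" and c: "fan z = feps f * c\<^sup>2"
      unfolding mem_Phi_iff scaled_squares_def by auto
    obtain d where d0: "d \<noteq> 0" and d: "fan f = feps f * d\<^sup>2"
      using euclidean_feps_cases[OF E f] .
    have e0: "feps f \<noteq> 0"
      using fsign_cases[of "fan f"] unfolding feps_def by auto
    have "f dvd z"
      using fps_dvd_iff f False le by blast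
    then obtain q where zq: "z = q * f"
      by (metis dvdE mult.commute)
    with False have q0: "q \<noteq> 0"
      by auto
    have "subdegree z = subdegree q + subdegree f" and fan_z: "fan z = fan q * fan f"
      using q0 f zq by (simp_all add: fan_mult)
    with par have "even (subdegree q)"
      by presburger
    moreover have "fan q = (c / d)\<^sup>2"
      using fan_z c d e0 d0 by (simp add: field_simps power2_eq_square)
    ultimately have "q \<in> Sq"
      unfolding mem_Sq_iff mem_squares_iff by blast
    then show ?thesis
      using zq by blast
  qed
qed

lemma PO_eq_Sq_plus_Phi:
  fixes f :: "'a::field fps"
  assumes "euclidean_field TYPE('a)" and "f \<noteq> 0"
  shows "PO f = {p + r | p r. p \<in> Sq \<and> r \<in> Phi (scaled_squares (feps f)) (subdegree f)}"
proof -
  have multiples: "Phi (scaled_squares (feps f)) (subdegree f) = (\<lambda>q. q * f) ` Sq"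
    using Phi_subset_Sq_times[OF assms] Sq_times_subset_Phi[OF assms] by (rule equalityI)
  show ?thesis
    unfolding PO_eq_Sq_plus_Sq_times[OF assms(1)] multiples by blast
qed

lemma Sq_subset_PO:
  fixes f :: "'a::field fps"
  assumes "euclidean_field TYPE('a)"
  shows "Sq \<subseteq> PO f"
proof
  fix z :: "'a fps"
  assume "z \<in> Sq"
  moreover have "z = z + 0 * f"
    by simp
  ultimately show "z \<in> PO f"
    unfolding PO_eq_Sq_plus_Sq_times[OF assms] using zero_in_Sq by blast
qed

lemma Phi_subset_PO:
  fixes f :: "'a::field fps"
  assumes "euclidean_field TYPE('a)" and "f \<noteq> 0"
  shows "Phi (scaled_squares (feps f)) (subdegree f) \<subseteq> PO f"
  unfolding PO_eq_Sq_plus_Phi[OF assms] using zero_in_Sq by force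

lemma PO_odd_subdegree:
  fixes f :: "'a::field fps"
  assumes E: "euclidean_field TYPE('a)" and f: "f \<noteq> 0" and odd: "odd (subdegree f)"
  shows "PO f = Sq \<union> Phi (scaled_squares (feps f)) (subdegree f)"
    (is "_ = Sq \<union> ?Q")
proof
  show "PO f \<subseteq> Sq \<union> ?Q"
  proof
    fix z
    assume "z \<in> PO f"
    then obtain p r where z: "z = p + r" and p: "p \<in> Sq" and r: "r \<in> ?Q"
      unfolding PO_eq_Sq_plus_Phi[OF E f] by blast
    show "z \<in> Sq \<union> ?Q"
    proof (cases "p = 0 \<or> r = 0")
      case True
      then show ?thesis using z p r by auto
    next
      case False
      have "even (subdegree p)" and "odd (subdegree r)"
        using p r False odd unfolding mem_Sq_iff mem_Phi_iff by (auto simp: odd_iff_mod_2_eq_one)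
      then consider "subdegree p < subdegree r" | "subdegree r < subdegree p"
        by (metis linorder_neqE_nat)
      then show ?thesis
      proof cases
        case 1
        then have "subdegree z = subdegree p" and "fan z = fan p"
          using add_lower_subdegree[of p r] False unfolding z by auto
        then have "z \<in> Sq"
          using p False unfolding mem_Sq_iff by simp
        then show ?thesis ..
      next
        case 2
        have "z = r + p"
          unfolding z by (rule add.commute)
        with 2 have "subdegree z = subdegree r" and "fan z = fan r"
          using add_lower_subdegree[of r p] False by auto
        moreover have "subdegree r mod 2 = subdegree f mod 2" and "subdegree f \<le> subdegree r"
          and "fan r \<in> scaled_squares (feps f)"
          using r False unfolding mem_Phi_iff by auto
        ultimately have "z \<in> ?Q"
          unfolding mem_Phi_iff by simp
        then show ?thesis ..
      qed
    qed
  qed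
  show "Sq \<union> ?Q \<subseteq> PO f"
    using Sq_subset_PO[OF E] Phi_subset_PO[OF E f] by (rule Un_least)
qed

lemma PO_even_subdegree_pos:
  fixes f :: "'a::field fps"
  assumes E: "euclidean_field TYPE('a)" and f: "f \<noteq> 0"
    and even: "even (subdegree f)" and pos: "feps f = 1"
  shows "PO f = Sq"
proof
  have "scaled_squares (feps f) = squares"
    unfolding pos scaled_squares_def squares_def by simp
  then have "Phi (scaled_squares (feps f)) (subdegree f) \<subseteq> Sq"
    using even unfolding Phi_def by (auto simp: even_iff_mod_2_eq_zero)
  then show "PO f \<subseteq> Sq"
    unfolding PO_eq_Sq_plus_Phi[OF E f] using add_in_Sq[OF E] by blast
  show "Sq \<subseteq> PO f"
    by (rule Sq_subset_PO[OF E])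
qed

lemma order_ideal_add_closed:
  fixes x y :: "'a::field fps"
  assumes "x = 0 \<or> n \<le> subdegree x" and "y = 0 \<or> n \<le> subdegree y"
  shows "x + y = 0 \<or> n \<le> subdegree (x + y)"
proof (cases "x + y = 0")
  case False
  have "(x + y) $ i = 0" if i: "i < n" for i
  proof -
    have "x $ i = 0" and "y $ i = 0"
      using assms i by (metis fps_zero_nth le_trans linorder_not_le nth_less_subdegree_zero)+
    then show ?thesis by simp
  qed
  with False show ?thesis
    by (metis subdegree_geI)
qed simp

lemma times_neg_square_eq:
  fixes k y h :: "'a::comm_ring_1"
  assumes "k * 2 = 1"
  shows "y * h\<^sup>2 = (k * (y + 1) * h)\<^sup>2 + (k * (y - 1))\<^sup>2 * - h\<^sup>2"
proof -
  have "(k * (y + 1) * h)\<^sup>2 + (k * (y - 1))\<^sup>2 * - h\<^sup>2 = (k * 2)\<^sup>2 * y * h\<^sup>2"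
    by (simp add: power2_eq_square algebra_simps)
  then show ?thesis
    using assms by simp
qed

lemma fps_const_inverse_two:
  assumes "(2::'a::field) \<noteq> 0"
  shows "fps_const (inverse 2 :: 'a) * 2 = 1"
proof -
  have "fps_const (inverse 2 :: 'a) * 2 = fps_const (inverse 2 * 2)"
    by (metis fps_const_add fps_const_mult one_add_one fps_const_1_eq_1)
  then show ?thesis
    using assms by simp
qed

lemma order_ideal_subset_PO:
  fixes f :: "'a::field fps"
  assumes E: "euclidean_field TYPE('a)" and f: "f \<noteq> 0"
    and even: "even (subdegree f)" and neg: "feps f \<noteq> 1"
  shows "{z. z = 0 \<or> subdegree f \<le> subdegree z} \<subseteq> PO f"
proof
  fix z :: "'a fps"
  assume "z \<in> {z. z = 0 \<or> subdegree f \<le> subdegree z}"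
  then consider "z = 0" | "z \<noteq> 0" and "subdegree f \<le> subdegree z"
    by auto
  then show "z \<in> PO f"
  proof cases
    case 1
    then show ?thesis
      using Sq_subset_PO[OF E] zero_in_Sq by blast
  next
    case 2
    obtain d where d: "fan f = feps f * d\<^sup>2"
      using euclidean_feps_cases[OF E f] by blast
    have "feps f = -1"
      using neg fsign_cases unfolding feps_def by auto
    with d f even have "- f \<in> Sq"
      unfolding mem_Sq_iff mem_squares_iff fan_def by auto
    then obtain h where h: "- f = h\<^sup>2"
      using Sq_imp_power2[OF euclidean_two_neq_zero[OF E]] by metis
    then have "h\<^sup>2 \<noteq> 0" and "subdegree (h\<^sup>2) \<le> subdegree z"
      using f 2 by (auto simp flip: h)
    then obtain y where "z = y * h\<^sup>2"
      using fps_dvd_iff 2 by (metis dvdE mult.commute)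
    also have "\<dots> = (fps_const (inverse 2) * (y + 1) * h)\<^sup>2
        + (fps_const (inverse 2) * (y - 1))\<^sup>2 * f"
      using times_neg_square_eq[OF fps_const_inverse_two[OF euclidean_two_neq_zero[OF E]]] h
      by (metis minus_minus)
    finally show ?thesis
      unfolding PO_eq_Sq_plus_Sq_times[OF E] using power2_in_Sq by blast
  qed
qed

lemma PO_subset_Sq_Un_order_ideal:
  fixes f :: "'a::field fps"
  assumes E: "euclidean_field TYPE('a)" and f: "f \<noteq> 0"
  shows "PO f \<subseteq> Sq \<union> {z. z = 0 \<or> subdegree f \<le> subdegree z}"
proof
  fix z
  assume "z \<in> PO f"
  then obtain p r where z: "z = p + r" and p: "p \<in> Sq"
    and r: "r \<in> Phi (scaled_squares (feps f)) (subdegree f)"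
    unfolding PO_eq_Sq_plus_Phi[OF E f] by blast
  have r_ideal: "r = 0 \<or> subdegree f \<le> subdegree r"
    using r unfolding mem_Phi_iff by auto
  show "z \<in> Sq \<union> {z. z = 0 \<or> subdegree f \<le> subdegree z}"
  proof (cases "p \<noteq> 0 \<and> subdegree p < subdegree f")
    case True
    with r_ideal have "r = 0 \<or> subdegree p < subdegree r"
      by auto
    then show ?thesis
      using add_lower_subdegree[of p r] True p z by (auto simp: mem_Sq_iff)
  next
    case False
    then show ?thesis
      using order_ideal_add_closed[of p "subdegree f" r] r_ideal z by auto
  qed
qed

lemma PO_even_subdegree_neg:
  fixes f :: "'a::field fps"
  assumes E: "euclidean_field TYPE('a)" and f: "f \<noteq> 0"
    and even: "even (subdegree f)" and neg: "feps f \<noteq> 1"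
  shows "PO f = Sq \<union> Phi UNIV (subdegree f) \<union> Phi UNIV (subdegree f + 1)"
proof -
  have "PO f = Sq \<union> {z. z = 0 \<or> subdegree f \<le> subdegree z}"
    using PO_subset_Sq_Un_order_ideal[OF E f] Sq_subset_PO[OF E] order_ideal_subset_PO[OF assms]
    by (intro equalityI Un_least)
  then show ?thesis
    unfolding Un_assoc Phi_UNIV_Un_Phi_UNIV_Suc .
qed

lemma PO_one: "euclidean_field TYPE('a::field) \<Longrightarrow> PO (1 :: 'a fps) = Sq"
  by (rule PO_even_subdegree_pos) (simp_all add: feps_def fan_def fsign_def one_in_squares)

theorem mainTheorem15:
  fixes f :: "'a::field fps"
  assumes "euclidean_field TYPE('a)"
    and "f \<noteq> 0"
  shows "(odd (subdegree f) \<longrightarrow>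
            PO f = Phi squares 0 \<union> Phi (scaled_squares (feps f)) (subdegree f))
       \<and> (even (subdegree f) \<and> feps f = 1 \<longrightarrow> PO f = Phi squares 0)
       \<and> (\<not> odd (subdegree f) \<and> \<not> (even (subdegree f) \<and> feps f = 1) \<longrightarrow>
            PO f = Phi squares 0 \<union> Phi UNIV (subdegree f) \<union> Phi UNIV (subdegree f + 1))
       \<and> (even (subdegree f) \<and> feps f = 1 \<longrightarrow> PO f = PO 1)
       \<and> (\<not> (even (subdegree f) \<and> feps f = 1) \<longrightarrow>
            PO f = PO (fps_const (feps f) * fps_X ^ subdegree f))"
proof -
  note E = assms(1) and f = assms(2)
  let ?e = "feps f" and ?n = "subdegree f"
  let ?g = "fps_const ?e * fps_X ^ ?n"
  have e: "?e = 1 \<or> ?e = -1"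
    unfolding feps_def by (rule fsign_cases)
  then have "?e \<noteq> 0"
    by auto
  note g = monomial_subdegree_fan[OF this, of ?n]
  have "feps ?g = ?e"
    using euclidean_fsign_sign[OF E e] g(3) by (simp only: feps_def[of ?g])
  note PO_g = PO_odd_subdegree[OF E g(1)] PO_even_subdegree_neg[OF E g(1)]
  consider "odd ?n" | "even ?n" "?e = 1" | "even ?n" "?e \<noteq> 1"
    by blast
  then show ?thesis
  proof cases
    case 1
    then show ?thesis
      using PO_odd_subdegree[OF E f] PO_g(1) g(2) \<open>feps ?g = ?e\<close> by simp
  next
    case 2
    then show ?thesis
      using PO_even_subdegree_pos[OF E f] PO_one[OF E] by simp
  next
    case 3
    then show ?thesis
      using PO_even_subdegree_neg[OF E f] PO_g(2) g(2) \<open>feps ?g = ?e\<close> by simp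
  qed
qed

end
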